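(* Let $\kappa$ be a regular cardinal, $\lambda\le\kappa$, and let $X\subseteq\kappa^\kappa$ be a $(\kappa,\lambda)$-Borel$^*$ set. Then there is a $\kappa$-closed set $C\subseteq\kappa^\kappa\times\kappa^\kappa$ such that $X=\{\xi\mid\exists\eta\,(\xi,\eta)\in C\}$.
   Context: Basic $\kappa$-open sets: $N_\eta=\{\zeta\in\kappa^\kappa\mid\eta\subseteq\zeta\}$ for $\eta:X\to\kappa$, $X\subseteq\kappa$, $|X|<\kappa$, and $\emptyset$; in $\kappa^\kappa\times\kappa^\kappa$ they are products $N_\eta\times N_\xi$. A set is $\kappa$-open if it is a union of at most $\kappa$ basic $\kappa$-open sets, $\kappa$-closed if its complement is $\kappa$-open; $\kappa$-Borel sets form the smallest class containing the basic $\kappa$-open sets closed under complements and unions and intersections of at most $\kappa$ sets. A good labelled $(\kappa,\lambda)$-tree is a pair $(T,L)$ where $T$ is a (rooted) tree without branches of length $\kappa$, every element has at most $\kappa$ immediate successors, $|T|\le\lambda$, every increasing sequence in $T$ has a supremum in $T$, $L(t)\in\{\bigcup,\bigcap\}$ for non-leaves $t$, and $L(t)$ is a basic $\kappa$-open set for leaves $t$. Borel$^*$-game $GB(\xi,(T,L))$: the play starts at the root; at a non-leaf $t$, II chooses an immediate successor if $L(t)=\bigcup$, I chooses if $L(t)=\bigcap$; at limits the play moves to the supremum; the play ends at a leaf $t$ and II wins iff $\xi\in L(t)$. $(T,L)$ is a $(\kappa,\lambda)$-Borel$^*$-code if it is a good labelled $(\kappa,\lambda)$-tree and there is $\pi$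 with: (i) $\mathrm{dom}(\pi)$ a $\kappa$-closed subset of $\kappa^\kappa$ and each $\pi(\eta)$ a strategy of II; (ii) whenever II has a winning strategy in $GB(\xi,(T,L))$, some $\pi(\eta)$ is one; (iii) $\{(\xi,\eta)\mid\eta\in\mathrm{dom}(\pi),\ \pi(\eta)$ winning for II in $GB(\xi,(T,L))\}$ is $\kappa$-Borel. A set $X\subseteq\kappa^\kappa$ is $(\kappa,\lambda)$-Borel$^*$ if there is a $(\kappa,\lambda)$-Borel$^*$-code $(T,L)$ with $\xi\in X\iff$ II has a winning strategy in $GB(\xi,(T,L))$, for all $\xi\in\kappa^\kappa$. *)

theory Defs
  imports Main
begin

unbundle cardinal_syntax

text \<open>The cardinal kappa is represented by a type 'k carrying a
cardinal order r (Card_order r, Field r = UNIV), so that the elements of kappa are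
the elements of 'k and kappa^kappa is the function space 'k => 'k.
A partial function eta : X -> kappa with X a subset of kappa is a map 'k => 'k option.\<close>

definition bN :: "('k \<Rightarrow> 'k option) \<Rightarrow> ('k \<Rightarrow> 'k) set" where
  "bN eta = {zeta. \<forall>x\<in>dom eta. eta x = Some (zeta x)}"

definition basic_open :: "('k \<times> 'k) set \<Rightarrow> ('k \<Rightarrow> 'k) set set" where
  "basic_open r = {bN eta | eta. |dom eta| <o r} \<union> {{}}"

definition basic_open2 :: "('k \<times> 'k) set \<Rightarrow> (('k \<Rightarrow> 'k) \<times> ('k \<Rightarrow> 'k)) set set" where
  "basic_open2 r = {bN eta \<times> bN xi | eta xi. |dom eta| <o r \<and> |dom xi| <o r} \<union> {{}}"

definition k_open :: "('k \<times> 'k) set \<Rightarrow> 'a set set \<Rightarrow> 'a set \<Rightarrow> bool" where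
  "k_open r B U \<longleftrightarrow> (\<exists>F. F \<subseteq> B \<and> |F| \<le>o r \<and> U = \<Union>F)"

definition k_closed :: "('k \<times> 'k) set \<Rightarrow> 'a set set \<Rightarrow> 'a set \<Rightarrow> bool" where
  "k_closed r B C \<longleftrightarrow> k_open r B (- C)"

inductive_set k_borel :: "('k \<times> 'k) set \<Rightarrow> 'a set set \<Rightarrow> 'a set set"
  for r :: "('k \<times> 'k) set" and B :: "'a set set" where
  basic: "U \<in> B \<Longrightarrow> U \<in> k_borel r B"
| compl: "U \<in> k_borel r B \<Longrightarrow> - U \<in> k_borel r B"
| union: "\<forall>U\<in>F. U \<in> k_borel r B \<Longrightarrow> |F| \<le>o r \<Longrightarrow> \<Union>F \<in> k_borel r B"
| inter: "\<forall>U\<in>F. U \<in> k_borel r B \<Longrightarrow> |F| \<le>o r \<Longrightarrow> \<Inter>F \<in> k_borel r B"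

text \<open>A tree is a set T of nodes (taken inside 'k, which is no restriction
since |T| <= lambda <= kappa) with a partial order R (the tree order, reflexive)
such that the predecessors of every node are well-ordered, and with a root.\<close>

definition is_tree :: "'k set \<Rightarrow> ('k \<times> 'k) set \<Rightarrow> bool" where
  "is_tree T R \<longleftrightarrow>
     R \<subseteq> T \<times> T \<and>
     (\<forall>t\<in>T. (t, t) \<in> R) \<and>
     (\<forall>s t. (s, t) \<in> R \<longrightarrow> (t, s) \<in> R \<longrightarrow> s = t) \<and>
     (\<forall>s t u. (s, t) \<in> R \<longrightarrow> (t, u) \<in> R \<longrightarrow> (s, u) \<in> R) \<and>
     (\<forall>t\<in>T. \<forall>s u. (s, t) \<in> R \<longrightarrow> (u, t) \<in> R \<longrightarrow> (s, u) \<in> R \<or> (u, s) \<in> R) \<and>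
     wf {(s, t). (s, t) \<in> R \<and> s \<noteq> t} \<and>
     (\<exists>rt\<in>T. \<forall>t\<in>T. (rt, t) \<in> R)"

definition tree_root :: "'k set \<Rightarrow> ('k \<times> 'k) set \<Rightarrow> 'k" where
  "tree_root T R = (THE rt. rt \<in> T \<and> (\<forall>t\<in>T. (rt, t) \<in> R))"

definition is_chain :: "'k set \<Rightarrow> ('k \<times> 'k) set \<Rightarrow> 'k set \<Rightarrow> bool" where
  "is_chain T R C \<longleftrightarrow> C \<subseteq> T \<and> (\<forall>x\<in>C. \<forall>y\<in>C. (x, y) \<in> R \<or> (y, x) \<in> R)"

definition imm_succ :: "'k set \<Rightarrow> ('k \<times> 'k) set \<Rightarrow> 'k \<Rightarrow> 'k set" where
  "imm_succ T R t = {s\<in>T. (t, s) \<in> R \<and> s \<noteq> t \<and>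
                        \<not> (\<exists>u\<in>T. (t, u) \<in> R \<and> (u, s) \<in> R \<and> u \<noteq> t \<and> u \<noteq> s)}"

definition is_leaf :: "'k set \<Rightarrow> ('k \<times> 'k) set \<Rightarrow> 'k \<Rightarrow> bool" where
  "is_leaf T R t \<longleftrightarrow> t \<in> T \<and> \<not> (\<exists>s\<in>T. (t, s) \<in> R \<and> s \<noteq> t)"

definition is_sup :: "'k set \<Rightarrow> ('k \<times> 'k) set \<Rightarrow> 'k set \<Rightarrow> 'k \<Rightarrow> bool" where
  "is_sup T R C s \<longleftrightarrow> s \<in> T \<and> (\<forall>c\<in>C. (c, s) \<in> R) \<and>
      (\<forall>u\<in>T. (\<forall>c\<in>C. (c, u) \<in> R) \<longrightarrow> (s, u) \<in> R)"

datatype 'a label = LUnion | LInter | LSet 'a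

text \<open>Good labelled (kappa,lambda)-tree.  "No branch of length kappa" is expressed
as: every chain has cardinality < kappa (equivalent, as chains are well-ordered).\<close>
definition good_labelled_tree ::
  "('k \<times> 'k) set \<Rightarrow> ('l \<times> 'l) set \<Rightarrow> 'k set \<Rightarrow> ('k \<times> 'k) set
     \<Rightarrow> ('k \<Rightarrow> ('k \<Rightarrow> 'k) set label) \<Rightarrow> bool" where
  "good_labelled_tree r l T R L \<longleftrightarrow>
     is_tree T R \<and>
     (\<forall>C. is_chain T R C \<longrightarrow> |C| <o r) \<and>
     (\<forall>t\<in>T. |imm_succ T R t| \<le>o r) \<and>
     |T| \<le>o l \<and>
     (\<forall>C. is_chain T R C \<and> C \<noteq> {} \<longrightarrow> (\<exists>s. is_sup T R C s)) \<and>
     (\<forall>t\<in>T. \<not> is_leaf T R t \<longrightarrow> L t = LUnion \<or> L t = LInter) \<and>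
     (\<forall>t\<in>T. is_leaf T R t \<longrightarrow> (\<exists>U. L t = LSet U \<and> U \<in> basic_open r))"

text \<open>Since in a tree the current
position determines the whole history of the play (its set of predecessors),
a strategy of II is a function assigning to each position where II moves
(nodes labelled by union) one of its immediate successors.\<close>
definition strategy_II :: "'k set \<Rightarrow> ('k \<times> 'k) set \<Rightarrow> ('k \<Rightarrow> ('k \<Rightarrow> 'k) set label)
     \<Rightarrow> ('k \<Rightarrow> 'k) \<Rightarrow> bool" where
  "strategy_II T R L \<sigma> \<longleftrightarrow>
     (\<forall>t\<in>T. \<not> is_leaf T R t \<and> L t = LUnion \<longrightarrow> \<sigma> t \<in> imm_succ T R t)"

text \<open>A node is reached by a play in which II follows sigma iff at every
union-labelled predecessor the play went through sigma's choice.\<close>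
definition consistent :: "'k set \<Rightarrow> ('k \<times> 'k) set \<Rightarrow> ('k \<Rightarrow> ('k \<Rightarrow> 'k) set label)
     \<Rightarrow> ('k \<Rightarrow> 'k) \<Rightarrow> 'k \<Rightarrow> bool" where
  "consistent T R L \<sigma> t \<longleftrightarrow>
     (\<forall>s\<in>T. (s, t) \<in> R \<and> s \<noteq> t \<and> L s = LUnion \<longrightarrow> (\<sigma> s, t) \<in> R)"

definition winning_II :: "'k set \<Rightarrow> ('k \<times> 'k) set \<Rightarrow> ('k \<Rightarrow> ('k \<Rightarrow> 'k) set label)
     \<Rightarrow> ('k \<Rightarrow> 'k) \<Rightarrow> ('k \<Rightarrow> 'k) \<Rightarrow> bool" where
  "winning_II T R L xi \<sigma> \<longleftrightarrow> strategy_II T R L \<sigma> \<and>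
     (\<forall>t. is_leaf T R t \<and> consistent T R L \<sigma> t \<longrightarrow> (\<exists>U. L t = LSet U \<and> xi \<in> U))"

definition II_wins :: "'k set \<Rightarrow> ('k \<times> 'k) set \<Rightarrow> ('k \<Rightarrow> ('k \<Rightarrow> 'k) set label)
     \<Rightarrow> ('k \<Rightarrow> 'k) \<Rightarrow> bool" where
  "II_wins T R L xi \<longleftrightarrow> (\<exists>\<sigma>. winning_II T R L xi \<sigma>)"

text \<open>(kappa,lambda)-Borel*-code; pi is given by its domain D and the map p.\<close>
definition borel_star_code ::
  "('k \<times> 'k) set \<Rightarrow> ('l \<times> 'l) set \<Rightarrow> 'k set \<Rightarrow> ('k \<times> 'k) set
     \<Rightarrow> ('k \<Rightarrow> ('k \<Rightarrow> 'k) set label) \<Rightarrow> bool" where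
  "borel_star_code r l T R L \<longleftrightarrow>
     good_labelled_tree r l T R L \<and>
     (\<exists>(D :: ('k \<Rightarrow> 'k) set) (p :: ('k \<Rightarrow> 'k) \<Rightarrow> ('k \<Rightarrow> 'k)).
        k_closed r (basic_open r) D \<and>
        (\<forall>eta\<in>D. strategy_II T R L (p eta)) \<and>
        (\<forall>xi. II_wins T R L xi \<longrightarrow> (\<exists>eta\<in>D. winning_II T R L xi (p eta))) \<and>
        {(xi, eta). eta \<in> D \<and> winning_II T R L xi (p eta)} \<in> k_borel r (basic_open2 r))"

definition borel_star :: "('k \<times> 'k) set \<Rightarrow> ('l \<times> 'l) set \<Rightarrow> ('k \<Rightarrow> 'k) set \<Rightarrow> bool" where
  "borel_star r l X \<longleftrightarrow>
     (\<exists>T R L. borel_star_code r l T R L \<and> (\<forall>xi. xi \<in> X \<longleftrightarrow> II_wins T R L xi))"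

end

theory Submission
  imports Defs
begin

text \<open>A strategy of player II picks an immediate successor at every union-node, and the
nodes are elements of kappa, so a strategy is itself an element of kappa^kappa and serves as
the witness eta.  It remains to see that the pairs (xi, sigma) with sigma winning for II in
GB(xi, (T, L)) form a kappa-closed set.  That sigma is not a strategy is witnessed by a single
coordinate of sigma.  That sigma loses at a leaf t is witnessed by the coordinates of sigma at
the union-nodes below t, fixed to the moves leading to t (fewer than kappa of them, as chains
are shorter than kappa), together with one coordinate of xi outside the basic set L(t).\<close>

lemma card_of_ordLeq_Field_UNIV:
  fixes r :: "('a \<times> 'a) set" and A :: "'a set"
  assumes "Card_order r" and "Field r = UNIV"
  shows "|A| \<le>o r"
  using card_of_mono1[of A "Field r"] card_of_Field_ordIso[OF assms(1)] assms(2)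
    ordLeq_ordIso_trans by auto

lemma finite_card_of_ordLess_Cinfinite:
  assumes "Cinfinite r" and "finite A"
  shows "|A| <o r"
proof -
  have "|A| <o |Field r|"
    using finite_ordLess_infinite[OF card_of_Well_order card_of_Well_order, of A "Field r"] assms
    unfolding Field_card_of cinfinite_def by blast
  then show ?thesis
    using card_of_Field_ordIso assms(1) ordLess_ordIso_trans by blast
qed

lemma k_open_UN:
  assumes "Cinfinite r" and "|I| \<le>o r" and "\<And>i. i \<in> I \<Longrightarrow> k_open r B (A i)"
  shows "k_open r B (\<Union>i\<in>I. A i)"
proof -
  have "\<forall>i\<in>I. \<exists>F. F \<subseteq> B \<and> |F| \<le>o r \<and> A i = \<Union>F"
    using assms(3) unfolding k_open_def by blast
  from bchoice[OF this]
  obtain F where F: "\<forall>i\<in>I. F i \<subseteq> B \<and> |F i| \<le>o r \<and> A i = \<Union>(F i)"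
    by blast
  have "|\<Union>i\<in>I. F i| \<le>o r"
    using assms(1,2) F by (intro card_of_UNION_ordLeq_infinite_Field) (auto simp: cinfinite_def)
  moreover have "(\<Union>i\<in>I. A i) = \<Union>(\<Union>i\<in>I. F i)"
    using F by auto
  moreover have "(\<Union>i\<in>I. F i) \<subseteq> B"
    using F by blast
  ultimately show ?thesis
    unfolding k_open_def by blast
qed

lemma k_open_Un:
  assumes "Cinfinite r" and "k_open r B U" and "k_open r B V"
  shows "k_open r B (U \<union> V)"
proof -
  obtain F G where "F \<subseteq> B" "|F| \<le>o r" "U = \<Union>F" "G \<subseteq> B" "|G| \<le>o r" "V = \<Union>G"
    using assms(2,3) unfolding k_open_def by blast
  then show ?thesis
    using card_of_Un_ordLeq_infinite_Field assms(1) unfolding k_open_def cinfinite_def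
    by (intro exI[of _ "F \<union> G"]) auto
qed

lemma k_closed_INT:
  assumes "Cinfinite r" and "|I| \<le>o r" and "\<And>i. i \<in> I \<Longrightarrow> k_closed r B (C i)"
  shows "k_closed r B (\<Inter>i\<in>I. C i)"
  using k_open_UN[OF assms(1,2), where A = "\<lambda>i. - C i"] assms(3)
  unfolding k_closed_def by (simp add: uminus_INF)

lemma k_closed_Int:
  assumes "Cinfinite r" and "k_closed r B C" and "k_closed r B D"
  shows "k_closed r B (C \<inter> D)"
  using k_open_Un[OF assms(1)] assms(2,3) unfolding k_closed_def by (simp add: Compl_Int)

lemma bN_empty [simp]: "bN Map.empty = UNIV"
  unfolding bN_def by simp

lemma mem_bN_singleton [simp]: "\<zeta> \<in> bN [x \<mapsto> v] \<longleftrightarrow> \<zeta> x = v"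
  unfolding bN_def by auto

lemma bN_apply:
  assumes "\<zeta> \<in> bN eta" and "eta x = Some v"
  shows "\<zeta> x = v"
proof -
  have "x \<in> dom eta"
    using assms(2) by blast
  then have "eta x = Some (\<zeta> x)"
    using assms(1) unfolding bN_def by blast
  with assms(2) show ?thesis
    by simp
qed

lemma bN_in_basic_open: "|dom eta| <o r \<Longrightarrow> bN eta \<in> basic_open r"
  unfolding basic_open_def by blast

lemma k_open_basic_open:
  assumes "Cinfinite r" and "U \<in> basic_open r"
  shows "k_open r (basic_open r) U"
  unfolding k_open_def
  using assms ordLess_imp_ordLeq[OF finite_card_of_ordLess_Cinfinite[of r "{U}"]]
  by (intro exI[of _ "{U}"]) auto

lemma k_open_UNIV:
  fixes r :: "('k \<times> 'k) set"
  assumes "Cinfinite r"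
  shows "k_open r (basic_open r) UNIV"
proof -
  have "|dom (Map.empty :: 'k \<Rightarrow> 'k option)| <o r"
    using finite_card_of_ordLess_Cinfinite[OF assms finite.emptyI] by simp
  then have "bN (Map.empty :: 'k \<Rightarrow> 'k option) \<in> basic_open r"
    by (rule bN_in_basic_open)
  then show ?thesis
    using k_open_basic_open[OF assms] by simp
qed

lemma k_open_coordinate_notin:
  assumes "Cinfinite r" and "Field r = UNIV"
  shows "k_open r (basic_open r) {\<zeta>. \<zeta> x \<notin> S}"
proof -
  have eq: "{\<zeta>. \<zeta> x \<notin> S} = (\<Union>v\<in>- S. bN [x \<mapsto> v])"
    by auto
  have "|- S| \<le>o r"
    using assms by (intro card_of_ordLeq_Field_UNIV) auto
  moreover have "k_open r (basic_open r) (bN [x \<mapsto> v])" for v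
    using finite_card_of_ordLess_Cinfinite[OF assms(1), of "{x}"]
    by (intro k_open_basic_open[OF assms(1)] bN_in_basic_open) simp
  ultimately show ?thesis
    unfolding eq by (rule k_open_UN[OF assms(1)])
qed

lemma k_open_Compl_bN:
  assumes "Cinfinite r" and "Field r = UNIV"
  shows "k_open r (basic_open r) (- bN eta)"
proof -
  have eq: "- bN eta = (\<Union>x\<in>dom eta. {\<zeta>. \<zeta> x \<notin> {v. eta x = Some v}})"
    unfolding bN_def by auto
  have "|dom eta| \<le>o r"
    using assms by (intro card_of_ordLeq_Field_UNIV) auto
  then show ?thesis
    unfolding eq by (rule k_open_UN[OF assms(1) _ k_open_coordinate_notin[OF assms]])
qed

lemma k_open_Compl_basic_open:
  assumes "Cinfinite r" and "Field r = UNIV" and "U \<in> basic_open r"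
  shows "k_open r (basic_open r) (- U)"
proof -
  from assms(3) consider "U = {}" | eta where "U = bN eta"
    unfolding basic_open_def by blast
  then show ?thesis
    using k_open_UNIV[OF assms(1)] k_open_Compl_bN[OF assms(1,2)] by cases simp_all
qed

lemma Times_in_basic_open2:
  assumes "U \<in> basic_open r" and "V \<in> basic_open r"
  shows "U \<times> V \<in> basic_open2 r"
proof (cases "U = {} \<or> V = {}")
  case True
  then show ?thesis
    unfolding basic_open2_def by auto
next
  case False
  then obtain eta xi where "U = bN eta" "|dom eta| <o r" "V = bN xi" "|dom xi| <o r"
    using assms unfolding basic_open_def by auto
  then show ?thesis
    unfolding basic_open2_def by blast
qed

lemma k_open_Times:
  assumes "Cinfinite r"
    and "k_open r (basic_open r) U" and "k_open r (basic_open r) V"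
  shows "k_open r (basic_open2 r) (U \<times> V)"
proof -
  obtain F G where F: "F \<subseteq> basic_open r" "|F| \<le>o r" "U = \<Union>F"
    and G: "G \<subseteq> basic_open r" "|G| \<le>o r" "V = \<Union>G"
    using assms(2,3) unfolding k_open_def by blast
  let ?H = "(\<lambda>(A, A'). A \<times> A') ` (F \<times> G)"
  have "?H \<subseteq> basic_open2 r"
    using F(1) G(1) by (auto intro: Times_in_basic_open2)
  moreover have "|F \<times> G| \<le>o r"
    using F(2) G(2) assms(1) by (intro card_of_Times_ordLeq_infinite_Field) (auto simp: cinfinite_def)
  then have "|?H| \<le>o r"
    by (rule ordLeq_transitive[OF card_of_image])
  moreover have "U \<times> V = \<Union>?H"
    using UN_Times_distrib[of "\<lambda>A. A" "\<lambda>A. A" F G] F(3) G(3) by simp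
  ultimately show ?thesis
    unfolding k_open_def by blast
qed

lemma is_treeD:
  assumes "is_tree T R"
  shows is_tree_subset: "R \<subseteq> T \<times> T"
    and is_tree_refl: "t \<in> T \<Longrightarrow> (t, t) \<in> R"
    and is_tree_trans: "(s, t) \<in> R \<Longrightarrow> (t, u) \<in> R \<Longrightarrow> (s, u) \<in> R"
    and is_tree_linear_below:
      "t \<in> T \<Longrightarrow> (s, t) \<in> R \<Longrightarrow> (u, t) \<in> R \<Longrightarrow> (s, u) \<in> R \<or> (u, s) \<in> R"
    and is_tree_wf: "wf {(s, t). (s, t) \<in> R \<and> s \<noteq> t}"
  using assms unfolding is_tree_def by meson+

lemma good_labelled_treeD:
  assumes "good_labelled_tree r l T R L"
  shows good_labelled_tree_is_tree: "is_tree T R"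
    and good_labelled_tree_chain: "is_chain T R C \<Longrightarrow> |C| <o r"
    and good_labelled_tree_leaf: "is_leaf T R t \<Longrightarrow> \<exists>U. L t = LSet U \<and> U \<in> basic_open r"
  using assms unfolding good_labelled_tree_def is_leaf_def by meson+

lemma leaf_in_tree: "is_leaf T R t \<Longrightarrow> t \<in> T"
  unfolding is_leaf_def by blast

lemma imm_succ_towards_exists:
  assumes "is_tree T R" and "(s, t) \<in> R" and "s \<noteq> t"
  shows "\<exists>u \<in> imm_succ T R s. (u, t) \<in> R"
proof -
  let ?between = "{u \<in> T. (s, u) \<in> R \<and> u \<noteq> s \<and> (u, t) \<in> R}"
  have "t \<in> ?between"
    using is_tree_subset[OF assms(1)] is_tree_refl[OF assms(1)] assms(2,3) by auto
  with is_tree_wf[OF assms(1)] obtain u where u: "u \<in> ?between"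
    and min: "\<And>w. (w, u) \<in> R \<Longrightarrow> w \<noteq> u \<Longrightarrow> w \<notin> ?between"
    by (rule wfE_min) blast
  have "u \<in> imm_succ T R s"
    unfolding imm_succ_def using u min is_tree_trans[OF assms(1)] by blast
  with u show ?thesis
    by blast
qed

lemma imm_succ_towards_unique:
  assumes "is_tree T R" and "t \<in> T"
    and "u \<in> imm_succ T R s" and "(u, t) \<in> R" and "u' \<in> imm_succ T R s" and "(u', t) \<in> R"
  shows "u = u'"
proof -
  have "(u, u') \<in> R \<or> (u', u) \<in> R"
    using is_tree_linear_below[OF assms(1,2,4,6)] .
  then show ?thesis
    using assms(3,5) unfolding imm_succ_def by blast
qed

definition succ_towards :: "'k set \<Rightarrow> ('k \<times> 'k) set \<Rightarrow> 'k \<Rightarrow> 'k \<Rightarrow> 'k" where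
  "succ_towards T R s t = (THE u. u \<in> imm_succ T R s \<and> (u, t) \<in> R)"

lemma succ_towards_eqI:
  assumes "is_tree T R" and "t \<in> T" and "u \<in> imm_succ T R s" and "(u, t) \<in> R"
  shows "succ_towards T R s t = u"
  unfolding succ_towards_def
proof (rule the_equality)
  show "u \<in> imm_succ T R s \<and> (u, t) \<in> R"
    using assms(3,4) ..
  show "u' = u" if "u' \<in> imm_succ T R s \<and> (u', t) \<in> R" for u'
    using imm_succ_towards_unique[OF assms(1,2) conjunct1[OF that] conjunct2[OF that] assms(3,4)] .
qed

lemma succ_towards:
  assumes "is_tree T R" and "(s, t) \<in> R" and "s \<noteq> t"
  shows "succ_towards T R s t \<in> imm_succ T R s" and "(succ_towards T R s t, t) \<in> R"
proof -
  obtain u where u: "u \<in> imm_succ T R s" "(u, t) \<in> R"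
    using imm_succ_towards_exists[OF assms] by blast
  moreover have "t \<in> T"
    using is_tree_subset[OF assms(1)] assms(2) by blast
  ultimately have "succ_towards T R s t = u"
    by (intro succ_towards_eqI[OF assms(1)])
  with u show "succ_towards T R s t \<in> imm_succ T R s" and "(succ_towards T R s t, t) \<in> R"
    by simp_all
qed

definition moves_towards ::
  "'k set \<Rightarrow> ('k \<times> 'k) set \<Rightarrow> ('k \<Rightarrow> 'a label) \<Rightarrow> 'k \<Rightarrow> 'k \<Rightarrow> 'k option" where
  "moves_towards T R L t =
     (\<lambda>s. if (s, t) \<in> R \<and> s \<noteq> t \<and> L s = LUnion then Some (succ_towards T R s t) else None)"

lemma dom_moves_towards:
  "dom (moves_towards T R L t) = {s. (s, t) \<in> R \<and> s \<noteq> t \<and> L s = LUnion}"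
  unfolding moves_towards_def by (auto split: if_splits)

lemma card_of_dom_moves_towards:
  assumes "good_labelled_tree r l T R L" and "t \<in> T"
  shows "|dom (moves_towards T R L t)| <o r"
proof -
  have tree: "is_tree T R"
    using assms(1) by (rule good_labelled_tree_is_tree)
  have "is_chain T R (dom (moves_towards T R L t))"
    unfolding is_chain_def dom_moves_towards
    using is_tree_subset[OF tree] is_tree_linear_below[OF tree assms(2)] by blast
  then show ?thesis
    by (rule good_labelled_tree_chain[OF assms(1)])
qed

lemma consistent_iff_mem_bN_moves_towards:
  assumes "is_tree T R" and "strategy_II T R L \<sigma>" and "t \<in> T"
  shows "consistent T R L \<sigma> t \<longleftrightarrow> \<sigma> \<in> bN (moves_towards T R L t)"
proof
  assume cons: "consistent T R L \<sigma> t"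
  show "\<sigma> \<in> bN (moves_towards T R L t)"
    unfolding bN_def
  proof (intro CollectI ballI)
    fix s
    assume "s \<in> dom (moves_towards T R L t)"
    have s: "s \<in> T" "(s, t) \<in> R" "s \<noteq> t" "L s = LUnion"
      using \<open>s \<in> dom (moves_towards T R L t)\<close> is_tree_subset[OF assms(1)]
      unfolding dom_moves_towards by blast+
    then have "\<not> is_leaf T R s"
      using assms(3) unfolding is_leaf_def by blast
    then have "\<sigma> s \<in> imm_succ T R s"
      using assms(2) s unfolding strategy_II_def by blast
    moreover have "(\<sigma> s, t) \<in> R"
      using cons s unfolding consistent_def by blast
    ultimately have "succ_towards T R s t = \<sigma> s"
      by (rule succ_towards_eqI[OF assms(1,3)])
    with s show "moves_towards T R L t s = Some (\<sigma> s)"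
      unfolding moves_towards_def by simp
  qed
next
  assume extends: "\<sigma> \<in> bN (moves_towards T R L t)"
  show "consistent T R L \<sigma> t"
    unfolding consistent_def
  proof (intro ballI impI)
    fix s
    assume s: "(s, t) \<in> R \<and> s \<noteq> t \<and> L s = LUnion"
    then have "moves_towards T R L t s = Some (succ_towards T R s t)"
      unfolding moves_towards_def by simp
    with extends have "\<sigma> s = succ_towards T R s t"
      by (rule bN_apply)
    then show "(\<sigma> s, t) \<in> R"
      using succ_towards(2)[OF assms(1)] s by simp
  qed
qed

fun label_set :: "'a set label \<Rightarrow> 'a set" where
  "label_set (LSet U) = U"
| "label_set LUnion = {}"
| "label_set LInter = {}"

lemma mem_label_set_iff: "x \<in> label_set l \<longleftrightarrow> (\<exists>U. l = LSet U \<and> x \<in> U)"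
  by (cases l) auto

definition winning_pairs ::
  "'k set \<Rightarrow> ('k \<times> 'k) set \<Rightarrow> ('k \<Rightarrow> ('k \<Rightarrow> 'k) set label) \<Rightarrow> (('k \<Rightarrow> 'k) \<times> ('k \<Rightarrow> 'k)) set"
  where "winning_pairs T R L = {(\<xi>, \<sigma>). winning_II T R L \<xi> \<sigma>}"

lemma winning_pairs_eq:
  assumes "is_tree T R"
  shows "winning_pairs T R L =
    (\<Inter>t \<in> {t \<in> T. \<not> is_leaf T R t \<and> L t = LUnion}. UNIV \<times> {\<sigma>. \<sigma> t \<in> imm_succ T R t}) \<inter>
    (\<Inter>t \<in> {t. is_leaf T R t}. - ((- label_set (L t)) \<times> bN (moves_towards T R L t)))"
    (is "_ = ?rhs")
proof (intro set_eqI, clarify)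
  fix \<xi> \<sigma>
  have "(\<xi>, \<sigma>) \<in> winning_pairs T R L \<longleftrightarrow>
        strategy_II T R L \<sigma> \<and>
        (\<forall>t. is_leaf T R t \<and> consistent T R L \<sigma> t \<longrightarrow> \<xi> \<in> label_set (L t))"
    by (simp add: winning_pairs_def winning_II_def mem_label_set_iff)
  also have "\<dots> \<longleftrightarrow> strategy_II T R L \<sigma> \<and>
        (\<forall>t. is_leaf T R t \<and> \<sigma> \<in> bN (moves_towards T R L t) \<longrightarrow> \<xi> \<in> label_set (L t))"
  proof (cases "strategy_II T R L \<sigma>")
    case True
    then show ?thesis
      by (simp add: consistent_iff_mem_bN_moves_towards[OF assms True leaf_in_tree] cong: conj_cong)
  qed simp
  also have "\<dots> \<longleftrightarrow> (\<xi>, \<sigma>) \<in> ?rhs"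
    unfolding strategy_II_def by blast
  finally show "(\<xi>, \<sigma>) \<in> winning_pairs T R L \<longleftrightarrow> (\<xi>, \<sigma>) \<in> ?rhs" .
qed

lemma k_closed_winning_pairs:
  fixes r :: "('k \<times> 'k) set"
  assumes "Cinfinite r" and "Field r = UNIV" and "good_labelled_tree r l T R L"
  shows "k_closed r (basic_open2 r) (winning_pairs T R L)"
proof -
  have small: "|A| \<le>o r" for A :: "'k set"
    using assms(1,2) by (intro card_of_ordLeq_Field_UNIV) auto
  have move_closed: "k_closed r (basic_open2 r) (UNIV \<times> {\<sigma>. \<sigma> t \<in> S})" for t S
  proof -
    have compl: "- (UNIV \<times> {\<sigma>. \<sigma> t \<in> S}) = UNIV \<times> {\<sigma>. \<sigma> t \<notin> S}"
      by auto
    show ?thesis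
      unfolding k_closed_def compl
      by (rule k_open_Times[OF assms(1) k_open_UNIV[OF assms(1)] k_open_coordinate_notin[OF assms(1,2)]])
  qed
  have leaf_closed:
    "k_closed r (basic_open2 r) (- ((- label_set (L t)) \<times> bN (moves_towards T R L t)))"
    if "is_leaf T R t" for t
  proof -
    have "label_set (L t) \<in> basic_open r"
      using good_labelled_tree_leaf[OF assms(3) that] by auto
    moreover have "|dom (moves_towards T R L t)| <o r"
      using card_of_dom_moves_towards[OF assms(3) leaf_in_tree[OF that]] .
    ultimately show ?thesis
      unfolding k_closed_def double_compl
      by (intro k_open_Times[OF assms(1)] k_open_Compl_basic_open[OF assms(1,2)]
          k_open_basic_open[OF assms(1)] bN_in_basic_open)
  qed
  show ?thesis
    unfolding winning_pairs_eq[OF good_labelled_tree_is_tree[OF assms(3)]]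
    by (intro k_closed_Int[OF assms(1)] k_closed_INT[OF assms(1) small] move_closed leaf_closed)
      simp
qed

theorem corollary3p5:
  fixes r :: "('k \<times> 'k) set" and l :: "('l \<times> 'l) set" and X :: "('k \<Rightarrow> 'k) set"
  assumes "Card_order r" and "Field r = UNIV" and "infinite (UNIV :: 'k set)"
    and "regularCard r"
    and "Card_order l" and "(l, r) \<in> ordLeq"
    and "borel_star r l X"
  shows "\<exists>C :: (('k \<Rightarrow> 'k) \<times> ('k \<Rightarrow> 'k)) set.
           k_closed r (basic_open2 r) C \<and> X = {xi. \<exists>eta. (xi, eta) \<in> C}"
proof -
  obtain T R L where code: "borel_star_code r l T R L"
    and X: "\<And>\<xi>. \<xi> \<in> X \<longleftrightarrow> II_wins T R L \<xi>"
    using assms(7) unfolding borel_star_def by blast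
  have "Cinfinite r"
    using assms(1-3) by (simp add: cinfinite_def)
  moreover have "good_labelled_tree r l T R L"
    using code unfolding borel_star_code_def by (rule conjunct1)
  ultimately have "k_closed r (basic_open2 r) (winning_pairs T R L)"
    using assms(2) k_closed_winning_pairs by blast
  moreover have "X = {\<xi>. \<exists>\<sigma>. (\<xi>, \<sigma>) \<in> winning_pairs T R L}"
    using X unfolding II_wins_def winning_pairs_def by auto
  ultimately show ?thesis
    by blast
qed

end
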